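(* Fix a horizon $T<\infty$ and assume the prefix space $\mathcal{X}_{\le T+1}$ is finite, that $0<R_{\min}\le r(z)\le R_{\max}<\infty$ for all prefixes $z$, that $0<\alpha_t<1$ for all $t$, and that $\sum_{x'}p(x'\mid z)=1$ for every prefix $z$. Let $\beta_0,\beta_1,\dots,\beta_T\ge 0$ be fixed (deterministic) powers. Run PB-SMC with $N$ particles, and let $\mathcal{P}_t$, $W_t$ be its weighted pool at round $t$. Then for every fixed $t\le T$ and every bounded $f:\mathcal{X}_{\le T+1}\to\mathbb{R}$, $$\frac{\sum_{z\in\mathcal{P}_t}W_t(z)f(z)}{\sum_{z\in\mathcal{P}_t}W_t(z)}\xrightarrow[N\to\infty]{p}\mathbb{E}_{\pi_t^{(\beta_t)}}[f(X)].$$ Moreover, if instead the powers are computed adaptively by $\beta_{t+1}=\beta_t+\gamma\bigl(1-(\sigma_t-1/C_t)\bigr)$ (with $\gamma>0$, $C_t=|\mathcal{P}_t|$, $a_z=r(z)/\sum_{y\in\mathcal{P}_t}r(y)$ and $\sigma_t=\sum_{z\in\mathcal{P}_t}a_z^2$, sums over the multiset), then each $\beta_t$ converges in probability as $N\to\infty$ to a deterministic limit $\beta_t^*$, and the same convergence holds with target $\pi_t^{(\beta_t^* )}$.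
   Context: Let $x_0$ be a fixed prompt and let reasoning steps take values in some set. A prefix is a finite sequence $z=x_{1:d}=(x_1,\dots,x_d)$ with $d\ge1$; $\mathrm{len}(z)=d$. $\mathcal{X}_s$ is the set of prefixes of length exactly $s$ and $\mathcal{X}_{\le T+1}=\bigcup_{s=1}^{T+1}\mathcal{X}_s$. A language model gives a normalized next-step kernel $p(x_d\mid x_{1:d-1})$ (conditioning on $x_0$ suppressed) and prefix probability $p(x_{1:d})=\prod_{s=1}^d p(x_s\mid x_{1:s-1})$. The parent of $z=x_{1:d}$ is $\mathrm{pa}(z)=x_{1:d-1}$ if $d\ge2$ and $\mathrm{pa}(z)=x_0$ if $d=1$. $r$ is a positive score function on prefixes with the convention $r(x_0)=1$. Powered target: for $\beta\ge0$ and round $t$, $\widetilde\pi_t^{(\beta)}(z)=p(z)\,r(z)^{\beta}\,\mathbf{1}\{\mathrm{len}(z)\le t+1\}$ on $\mathcal{X}_{\le T+1}$, and $\pi_t^{(\beta)}=\widetilde\pi_t^{(\beta)}/\sum_{y}\widetilde\pi_t^{(\beta)}(y)$. Correction factor: for $t\ge1$, $$F_t(z)=\frac{\left(\frac{r(z)}{r(\mathrm{pa}(z))}\right)^{\beta_{t-1}}r(z)^{\beta_t-\beta_{t-1}}}{\alpha_t\mathbf{1}\{\mathrm{len}(z)\ge2\}+(1-\alpha_t)\left(\frac{r(z)}{r(\mathrm{pa}(z))}\right)^{\beta_{t-1}}\mathbf{1}\{\mathrm{len}(z)\le t\}}.$$ PB-SMC (Power Backtrack SMC): $\mathcal{P}_0$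 is a multiset of $N$ i.i.d. one-step samples $x_1\sim p(\cdot\mid x_0)$ with weights $W_0(z)=r(z)^{\beta_0}$. For $t=1,\dots,T$: (i) draw $N$ parents i.i.d. from $\mathcal{P}_{t-1}$ with probabilities proportional to $W_{t-1}$ and extend each parent $u$ by one step $x'\sim p(\cdot\mid u)$, giving the multiset $\mathcal{B}_t$ of $N$ new children; (ii) independently draw a multiset $S_t$ of $Nt$ elements i.i.d. from $\mathcal{P}_{t-1}$ with probabilities proportional to $W_{t-1}$ (no extension); (iii) set $\mathcal{P}_t=S_t\uplus\mathcal{B}_t$ with weights $W_t(z)=\alpha_tF_t(z)$ for $z\in\mathcal{B}_t$ and $W_t(z)=(1-\alpha_t)F_t(z)/t$ for $z\in S_t$. *)

theory Defs
  imports "HOL-Probability.Probability_Mass_Function"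
begin

text \<open>Reasoning steps have a finite type 'a (equivalently: the prefix space of
bounded length is finite).  A prefix x_{1:d} is a list of length d \<ge> 1; the
empty list plays the role of the prompt x_0.  The next-step kernel is
K :: 'a list \<Rightarrow> 'a pmf, i.e. K u is p(. | u) (normalized by construction).\<close>

definition prefixes :: "nat \<Rightarrow> 'a list set" where
  "prefixes T = {z. 1 \<le> length z \<and> length z \<le> T + 1}"

definition pprob :: "('a list \<Rightarrow> 'a pmf) \<Rightarrow> 'a list \<Rightarrow> real" where
  "pprob K z = (\<Prod>i<length z. pmf (K (take i z)) (z ! i))"

definition rsc :: "('a list \<Rightarrow> real) \<Rightarrow> 'a list \<Rightarrow> real" where
  "rsc r z = (if z = [] then 1 else r z)"

definition target_exp ::
  "('a list \<Rightarrow> 'a pmf) \<Rightarrow> ('a list \<Rightarrow> real) \<Rightarrow> nat \<Rightarrow> nat \<Rightarrow> real \<Rightarrow> ('a list \<Rightarrow> real) \<Rightarrow> real" where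
  "target_exp K r T t \<beta> f =
     (\<Sum>z\<in>prefixes T. pprob K z * r z powr \<beta> * (if length z \<le> t + 1 then 1 else 0) * f z) /
     (\<Sum>z\<in>prefixes T. pprob K z * r z powr \<beta> * (if length z \<le> t + 1 then 1 else 0))"

definition Fcorr :: "('a list \<Rightarrow> real) \<Rightarrow> (nat \<Rightarrow> real) \<Rightarrow> real \<Rightarrow> real \<Rightarrow> nat \<Rightarrow> 'a list \<Rightarrow> real" where
  "Fcorr r \<alpha> bp bc t z =
     (let q = r z / rsc r (butlast z) in
      (q powr bp * r z powr (bc - bp)) /
      (\<alpha> t * (if 2 \<le> length z then 1 else 0) +
       (1 - \<alpha> t) * q powr bp * (if length z \<le> t then 1 else 0)))"

fun iid :: "nat \<Rightarrow> 'b pmf \<Rightarrow> 'b list pmf" where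
  "iid 0 q = return_pmf []"
| "iid (Suc n) q = bind_pmf q (\<lambda>x. map_pmf (Cons x) (iid n q))"

text \<open>A weighted pool is a list (order irrelevant, i.e. a multiset) of
(prefix, weight) pairs; resample draws a prefix with probability proportional
to its weight.\<close>
definition resample :: "('b \<times> real) list \<Rightarrow> 'b pmf" where
  "resample P = pmf_of_list (map (\<lambda>(z, w). (z, w / sum_list (map snd P))) P)"

definition estimate :: "('a list \<times> real) list \<Rightarrow> ('a list \<Rightarrow> real) \<Rightarrow> real" where
  "estimate P f = (\<Sum>(z, w)\<leftarrow>P. w * f z) / (\<Sum>(z, w)\<leftarrow>P. w)"

text \<open>Generic PB-SMC. The state after round t is (P_t, beta_t). beta_0 = b0,
and beta_t = upd t P_{t-1} beta_{t-1} for t \<ge> 1.\<close>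
fun pbsmc_gen ::
  "('a list \<Rightarrow> 'a pmf) \<Rightarrow> ('a list \<Rightarrow> real) \<Rightarrow> (nat \<Rightarrow> real) \<Rightarrow>
   (nat \<Rightarrow> ('a list \<times> real) list \<Rightarrow> real \<Rightarrow> real) \<Rightarrow> real \<Rightarrow> nat \<Rightarrow> nat \<Rightarrow>
   (('a list \<times> real) list \<times> real) pmf" where
  "pbsmc_gen K r \<alpha> upd b0 N 0 =
     map_pmf (\<lambda>xs. (map (\<lambda>x. ([x], r [x] powr b0)) xs, b0)) (iid N (K []))"
| "pbsmc_gen K r \<alpha> upd b0 N (Suc t) =
     bind_pmf (pbsmc_gen K r \<alpha> upd b0 N t) (\<lambda>(P, b).
       let b' = upd (Suc t) P b; q = resample P in
       bind_pmf (iid N (bind_pmf q (\<lambda>u. map_pmf (\<lambda>x. u @ [x]) (K u)))) (\<lambda>B.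
       map_pmf (\<lambda>S.
         (map (\<lambda>z. (z, \<alpha> (Suc t) * Fcorr r \<alpha> b b' (Suc t) z)) B @
          map (\<lambda>z. (z, (1 - \<alpha> (Suc t)) * Fcorr r \<alpha> b b' (Suc t) z / real (Suc t))) S, b'))
         (iid (N * Suc t) q)))"

definition pbsmc_fixed ::
  "('a list \<Rightarrow> 'a pmf) \<Rightarrow> ('a list \<Rightarrow> real) \<Rightarrow> (nat \<Rightarrow> real) \<Rightarrow> (nat \<Rightarrow> real) \<Rightarrow> nat \<Rightarrow> nat \<Rightarrow>
   (('a list \<times> real) list \<times> real) pmf" where
  "pbsmc_fixed K r \<alpha> \<beta> N t = pbsmc_gen K r \<alpha> (\<lambda>s P b. \<beta> s) (\<beta> 0) N t"

definition sigma_pool :: "('a list \<Rightarrow> real) \<Rightarrow> ('a list \<times> real) list \<Rightarrow> real" where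
  "sigma_pool r P = (\<Sum>(z, w)\<leftarrow>P. (r z / (\<Sum>(y, v)\<leftarrow>P. r y))\<^sup>2)"

definition adaptive_upd :: "('a list \<Rightarrow> real) \<Rightarrow> real \<Rightarrow> nat \<Rightarrow> ('a list \<times> real) list \<Rightarrow> real \<Rightarrow> real" where
  "adaptive_upd r \<gamma> t P b = b + \<gamma> * (1 - (sigma_pool r P - 1 / real (length P)))"

definition pbsmc_adaptive ::
  "('a list \<Rightarrow> 'a pmf) \<Rightarrow> ('a list \<Rightarrow> real) \<Rightarrow> (nat \<Rightarrow> real) \<Rightarrow> real \<Rightarrow> real \<Rightarrow> nat \<Rightarrow> nat \<Rightarrow>
   (('a list \<times> real) list \<times> real) pmf" where
  "pbsmc_adaptive K r \<alpha> \<gamma> b0 N t = pbsmc_gen K r \<alpha> (adaptive_upd r \<gamma>) b0 N t"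

end

theory Submission
  imports Defs "HOL-Probability.Hoeffding" "HOL-Real_Asymp.Real_Asymp"
begin

text \<open>Divided by N, the masses that the pool of round t puts on the (finitely many) prefixes
converge in probability, by induction on t, to a positive multiple of the unnormalised target
p(z) r(z)^beta_t [len z \<le> t + 1].  Given the pool of round t, the N extended children and the
N t survivors of round t + 1 are i.i.d. draws from the extension kernel and from the resampling
distribution, so by Hoeffding's inequality every new mass concentrates around its conditional
mean F_{t+1}(z) (alpha p_ext(z) + (1 - alpha) p_res(z)).  By the induction hypothesis and
continuity this mean converges, and the correction factor F is exactly the one that turns its
limit into the next unnormalised target.  The self-normalised estimate is a continuous function
of the masses.

The argument only needs the powers to stay within O(1/N) of deterministic values.  For the
adaptive schedule, scores in [R_min, R_max] give sigma_t \<le> (R_max/R_min)^2 / C_t, so beta_t is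
within O(t/N) of beta_0 + gamma t.\<close>

section \<open>Convergence in probability\<close>

definition converges_in_prob ::
  "(nat \<Rightarrow> 'b pmf) \<Rightarrow> (nat \<Rightarrow> 'b \<Rightarrow> 'c::metric_space) \<Rightarrow> 'c \<Rightarrow> bool" where
  "converges_in_prob M X c \<longleftrightarrow>
     (\<forall>\<epsilon>>0. ((\<lambda>N. measure_pmf.prob (M N) {s. dist (X N s) c > \<epsilon>}) \<longlongrightarrow> 0) sequentially)"

lemma measure_pmf_prob_mono_support:
  assumes "\<And>s. s \<in> set_pmf M \<Longrightarrow> s \<in> A \<Longrightarrow> s \<in> B"
  shows "measure_pmf.prob M A \<le> measure_pmf.prob M B"
  using assms by (intro measure_pmf.finite_measure_mono_AE) (auto simp: AE_measure_pmf_iff)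

lemma converges_in_probI_bound:
  assumes "\<And>\<epsilon>. \<epsilon> > 0 \<Longrightarrow> \<exists>\<rho>. (\<rho> \<longlongrightarrow> 0) sequentially \<and>
      eventually (\<lambda>N. measure_pmf.prob (M N) {s. dist (X N s) c > \<epsilon>} \<le> \<rho> N) sequentially"
  shows "converges_in_prob M X c"
  unfolding converges_in_prob_def
proof (intro allI impI)
  fix \<epsilon> :: real
  assume "\<epsilon> > 0"
  then obtain \<rho> where \<rho>: "(\<rho> \<longlongrightarrow> 0) sequentially"
    and bound: "eventually (\<lambda>N. measure_pmf.prob (M N) {s. dist (X N s) c > \<epsilon>} \<le> \<rho> N) sequentially"
    using assms by blast
  show "((\<lambda>N. measure_pmf.prob (M N) {s. dist (X N s) c > \<epsilon>}) \<longlongrightarrow> 0) sequentially"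
    by (rule tendsto_sandwich[OF _ bound tendsto_const \<rho>]) simp
qed

lemma converges_in_prob_cong:
  assumes "converges_in_prob M X c"
    and "eventually (\<lambda>N. \<forall>s\<in>set_pmf (M N). X N s = Y N s) sequentially"
  shows "converges_in_prob M Y c"
  unfolding converges_in_prob_def
proof (intro allI impI)
  fix \<epsilon> :: real
  assume "\<epsilon> > 0"
  then have "((\<lambda>N. measure_pmf.prob (M N) {s. dist (X N s) c > \<epsilon>}) \<longlongrightarrow> 0) sequentially"
    using assms(1) unfolding converges_in_prob_def by blast
  moreover have "eventually (\<lambda>N. measure_pmf.prob (M N) {s. dist (X N s) c > \<epsilon>} =
      measure_pmf.prob (M N) {s. dist (Y N s) c > \<epsilon>}) sequentially"
    using assms(2) by eventually_elim (intro antisym measure_pmf_prob_mono_support; auto)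
  ultimately show "((\<lambda>N. measure_pmf.prob (M N) {s. dist (Y N s) c > \<epsilon>}) \<longlongrightarrow> 0) sequentially"
    using Lim_transform_eventually by force
qed

lemma converges_in_prob_deterministic:
  assumes "eventually (\<lambda>N. \<forall>s\<in>set_pmf (M N). dist (X N s) c \<le> e N) sequentially"
    and "(e \<longlongrightarrow> 0) sequentially"
  shows "converges_in_prob M X c"
proof (rule converges_in_probI_bound)
  fix \<epsilon> :: real
  assume "\<epsilon> > 0"
  then have "eventually (\<lambda>N. e N < \<epsilon>) sequentially"
    using assms(2) by (simp add: order_tendstoD(2))
  with assms(1) have "eventually (\<lambda>N. measure_pmf.prob (M N) {s. dist (X N s) c > \<epsilon>} \<le> 0) sequentially"
  proof eventually_elim
    case (elim N)
    then have "measure_pmf.prob (M N) {s. dist (X N s) c > \<epsilon>} \<le> measure_pmf.prob (M N) {}"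
      by (intro measure_pmf_prob_mono_support) force
    then show ?case by simp
  qed
  then show "\<exists>\<rho>. (\<rho> \<longlongrightarrow> 0) sequentially \<and>
      eventually (\<lambda>N. measure_pmf.prob (M N) {s. dist (X N s) c > \<epsilon>} \<le> \<rho> N) sequentially"
    by (intro exI[of _ "\<lambda>_. 0"]) auto
qed

lemma converges_in_prob_const: "converges_in_prob M (\<lambda>N s. c) c"
  by (rule converges_in_prob_deterministic[where e = "\<lambda>_. 0"]) auto

lemma converges_in_prob_map_pmf:
  "converges_in_prob (\<lambda>N. map_pmf (g N) (M N)) X c \<longleftrightarrow> converges_in_prob M (\<lambda>N s. X N (g N s)) c"
  by (simp add: converges_in_prob_def vimage_def)

lemma converges_in_prob_isCont:
  assumes "converges_in_prob M X c" and "isCont g c"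
  shows "converges_in_prob M (\<lambda>N s. g (X N s)) (g c)"
  unfolding converges_in_prob_def
proof (intro allI impI)
  fix \<epsilon> :: real
  assume "\<epsilon> > 0"
  then obtain \<delta> where \<delta>: "\<delta> > 0" "\<And>x. dist x c < \<delta> \<Longrightarrow> dist (g x) (g c) < \<epsilon>"
    using assms(2) continuous_at_eps_delta by blast
  have "\<delta> / 2 > 0"
    using \<delta>(1) by simp
  then have lim: "((\<lambda>N. measure_pmf.prob (M N) {s. dist (X N s) c > \<delta> / 2}) \<longlongrightarrow> 0) sequentially"
    using assms(1) unfolding converges_in_prob_def by blast
  have bound: "measure_pmf.prob (M N) {s. dist (g (X N s)) (g c) > \<epsilon>}
      \<le> measure_pmf.prob (M N) {s. dist (X N s) c > \<delta> / 2}" for N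
  proof (intro measure_pmf_prob_mono_support)
    fix s
    assume "s \<in> {s. dist (g (X N s)) (g c) > \<epsilon>}"
    then have "\<not> dist (X N s) c < \<delta>"
      using \<delta>(2) by fastforce
    then show "s \<in> {s. dist (X N s) c > \<delta> / 2}"
      using \<delta>(1) by simp
  qed
  show "((\<lambda>N. measure_pmf.prob (M N) {s. dist (g (X N s)) (g c) > \<epsilon>}) \<longlongrightarrow> 0) sequentially"
    by (rule tendsto_sandwich[OF _ _ tendsto_const lim]) (simp, intro always_eventually allI bound)
qed

lemma measure_pmf_prob_union_le:
  "measure_pmf.prob M (A \<union> B) \<le> measure_pmf.prob M A + measure_pmf.prob M B"
  by (rule measure_subadditive) (auto simp: measure_pmf.emeasure_eq_measure)

lemma converges_in_prob_Pair:
  assumes "converges_in_prob M X a" and "converges_in_prob M Y b"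
  shows "converges_in_prob M (\<lambda>N s. (X N s, Y N s)) (a, b)"
  unfolding converges_in_prob_def
proof (intro allI impI)
  fix \<epsilon> :: real
  assume "\<epsilon> > 0"
  let ?bad = "\<lambda>N. {s. dist (X N s) a > \<epsilon> / 2} \<union> {s. dist (Y N s) b > \<epsilon> / 2}"
  have "((\<lambda>N. measure_pmf.prob (M N) {s. dist (X N s) a > \<epsilon> / 2}) \<longlongrightarrow> 0) sequentially"
    and "((\<lambda>N. measure_pmf.prob (M N) {s. dist (Y N s) b > \<epsilon> / 2}) \<longlongrightarrow> 0) sequentially"
    using assms half_gt_zero[OF \<open>\<epsilon> > 0\<close>] unfolding converges_in_prob_def by blast+
  then have lim: "((\<lambda>N. measure_pmf.prob (M N) {s. dist (X N s) a > \<epsilon> / 2} +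
      measure_pmf.prob (M N) {s. dist (Y N s) b > \<epsilon> / 2}) \<longlongrightarrow> 0) sequentially"
    using tendsto_add by fastforce
  have bound: "measure_pmf.prob (M N) {s. dist (X N s, Y N s) (a, b) > \<epsilon>}
      \<le> measure_pmf.prob (M N) {s. dist (X N s) a > \<epsilon> / 2} +
        measure_pmf.prob (M N) {s. dist (Y N s) b > \<epsilon> / 2}" for N
  proof -
    have "measure_pmf.prob (M N) {s. dist (X N s, Y N s) (a, b) > \<epsilon>}
        \<le> measure_pmf.prob (M N) (?bad N)"
    proof (intro measure_pmf_prob_mono_support)
      fix s
      have "dist (X N s, Y N s) (a, b) \<le> dist (X N s) a + dist (Y N s) b"
        unfolding dist_Pair_Pair by (intro sqrt_sum_squares_le_sum) auto
      then show "s \<in> {s. dist (X N s, Y N s) (a, b) > \<epsilon>} \<Longrightarrow> s \<in> ?bad N"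
        by (simp only: mem_Collect_eq Un_iff) arith
    qed
    then show ?thesis
      using measure_pmf_prob_union_le order_trans by blast
  qed
  show "((\<lambda>N. measure_pmf.prob (M N) {s. dist (X N s, Y N s) (a, b) > \<epsilon>}) \<longlongrightarrow> 0) sequentially"
    by (rule tendsto_sandwich[OF _ _ tendsto_const lim]) (simp, intro always_eventually allI bound)
qed

lemma converges_in_prob_isCont2:
  assumes "converges_in_prob M X a" and "converges_in_prob M Y b"
    and "isCont (\<lambda>p. g (fst p) (snd p)) (a, b)"
  shows "converges_in_prob M (\<lambda>N s. g (X N s) (Y N s)) (g a b)"
  using converges_in_prob_isCont[OF converges_in_prob_Pair[OF assms(1,2)] assms(3)] by simp

lemma converges_in_prob_add:
  fixes X Y :: "nat \<Rightarrow> 'b \<Rightarrow> 'c::real_normed_vector"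
  assumes "converges_in_prob M X a" and "converges_in_prob M Y b"
  shows "converges_in_prob M (\<lambda>N s. X N s + Y N s) (a + b)"
  by (rule converges_in_prob_isCont2[OF assms]) (intro continuous_intros)

lemma converges_in_prob_mult:
  fixes X Y :: "nat \<Rightarrow> 'b \<Rightarrow> 'c::real_normed_algebra"
  assumes "converges_in_prob M X a" and "converges_in_prob M Y b"
  shows "converges_in_prob M (\<lambda>N s. X N s * Y N s) (a * b)"
  by (rule converges_in_prob_isCont2[OF assms]) (intro continuous_intros)

lemma converges_in_prob_divide:
  fixes X Y :: "nat \<Rightarrow> 'b \<Rightarrow> 'c::real_normed_field"
  assumes "converges_in_prob M X a" and "converges_in_prob M Y b" and "b \<noteq> 0"
  shows "converges_in_prob M (\<lambda>N s. X N s / Y N s) (a / b)"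
  by (rule converges_in_prob_isCont2[OF assms(1,2)]) (use assms(3) in \<open>intro continuous_intros; simp\<close>)

lemma converges_in_prob_sum:
  fixes X :: "'k \<Rightarrow> nat \<Rightarrow> 'b \<Rightarrow> 'c::real_normed_vector"
  assumes "finite A" and "\<And>z. z \<in> A \<Longrightarrow> converges_in_prob M (X z) (c z)"
  shows "converges_in_prob M (\<lambda>N s. \<Sum>z\<in>A. X z N s) (\<Sum>z\<in>A. c z)"
  using assms
  by (induction A rule: finite_induct) (auto intro: converges_in_prob_add converges_in_prob_const[of M 0, simplified])

lemma measure_pmf_prob_bind_le:
  assumes "0 \<le> \<rho>"
    and "\<And>a. a \<in> set_pmf A \<Longrightarrow> a \<notin> Bad \<Longrightarrow> measure_pmf.prob (C a) E \<le> \<rho>"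
  shows "measure_pmf.prob (bind_pmf A C) E \<le> \<rho> + measure_pmf.prob A Bad"
proof -
  have "emeasure (measure_pmf (bind_pmf A C)) E = (\<integral>\<^sup>+a. emeasure (C a) E \<partial>A)"
    by simp
  also have "\<dots> \<le> (\<integral>\<^sup>+a. (ennreal \<rho> + indicator Bad a) \<partial>A)"
  proof (rule nn_integral_mono_AE)
    show "AE a in measure_pmf A. emeasure (C a) E \<le> ennreal \<rho> + indicator Bad a"
      unfolding AE_measure_pmf_iff
    proof
      fix a
      assume "a \<in> set_pmf A"
      show "emeasure (C a) E \<le> ennreal \<rho> + indicator Bad a"
      proof (cases "a \<in> Bad")
        case True
        have "emeasure (C a) E \<le> 1"
          by (rule measure_pmf.emeasure_le_1)
        also have "\<dots> \<le> ennreal \<rho> + indicator Bad a"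
          using True by simp
        finally show ?thesis .
      next
        case False
        then show ?thesis
          using assms(2)[OF \<open>a \<in> set_pmf A\<close>]
          by (simp add: measure_pmf.emeasure_eq_measure ennreal_leI)
      qed
    qed
  qed
  also have "\<dots> = ennreal \<rho> + emeasure A Bad"
    by (subst nn_integral_add) (auto simp: measure_pmf.emeasure_space_1)
  also have "\<dots> = ennreal (\<rho> + measure_pmf.prob A Bad)"
    using assms(1) by (simp add: measure_pmf.emeasure_eq_measure ennreal_plus)
  finally have "ennreal (measure_pmf.prob (bind_pmf A C) E) \<le> ennreal (\<rho> + measure_pmf.prob A Bad)"
    by (simp only: measure_pmf.emeasure_eq_measure)
  then show ?thesis
    using assms(1) by (subst (asm) ennreal_le_iff) auto
qed

lemma converges_in_prob_bind_pmfI: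
  assumes "\<And>\<epsilon>. \<epsilon> > 0 \<Longrightarrow> \<exists>\<rho> Bad. (\<forall>N. 0 \<le> \<rho> N) \<and> (\<rho> \<longlongrightarrow> 0) sequentially \<and>
      ((\<lambda>N. measure_pmf.prob (A N) (Bad N)) \<longlongrightarrow> 0) sequentially \<and>
      eventually (\<lambda>N. \<forall>a\<in>set_pmf (A N). a \<notin> Bad N \<longrightarrow>
        measure_pmf.prob (C N a) {s. dist (X N s) c > \<epsilon>} \<le> \<rho> N) sequentially"
  shows "converges_in_prob (\<lambda>N. bind_pmf (A N) (C N)) X c"
proof (rule converges_in_probI_bound)
  fix \<epsilon> :: real
  assume "\<epsilon> > 0"
  then obtain \<rho> Bad where \<rho>_nonneg: "\<And>N. 0 \<le> \<rho> N" and \<rho>: "(\<rho> \<longlongrightarrow> 0) sequentially"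
    and Bad: "((\<lambda>N. measure_pmf.prob (A N) (Bad N)) \<longlongrightarrow> 0) sequentially"
    and good: "eventually (\<lambda>N. \<forall>a\<in>set_pmf (A N). a \<notin> Bad N \<longrightarrow>
        measure_pmf.prob (C N a) {s. dist (X N s) c > \<epsilon>} \<le> \<rho> N) sequentially"
    using assms[OF \<open>\<epsilon> > 0\<close>] by auto
  from good have bound: "eventually (\<lambda>N. measure_pmf.prob (bind_pmf (A N) (C N)) {s. dist (X N s) c > \<epsilon>}
      \<le> \<rho> N + measure_pmf.prob (A N) (Bad N)) sequentially"
  proof eventually_elim
    case (elim N)
    show ?case
    proof (rule measure_pmf_prob_bind_le[OF \<rho>_nonneg])
      fix a
      assume "a \<in> set_pmf (A N)" and "a \<notin> Bad N"
      then show "measure_pmf.prob (C N a) {s. dist (X N s) c > \<epsilon>} \<le> \<rho> N"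
        using elim by blast
    qed
  qed
  have lim: "((\<lambda>N. \<rho> N + measure_pmf.prob (A N) (Bad N)) \<longlongrightarrow> 0) sequentially"
    using tendsto_add[OF \<rho> Bad] by (simp only: add_0_left)
  show "\<exists>\<rho>. (\<rho> \<longlongrightarrow> 0) sequentially \<and>
      eventually (\<lambda>N. measure_pmf.prob (bind_pmf (A N) (C N)) {s. dist (X N s) c > \<epsilon>} \<le> \<rho> N) sequentially"
    by (rule exI, rule conjI[OF lim bound])
qed

section \<open>I.i.d. sampling\<close>

lemma set_pmf_iid: "xs \<in> set_pmf (iid n q) \<Longrightarrow> length xs = n \<and> set xs \<subseteq> set_pmf q"
  by (induction n arbitrary: xs) fastforce+

lemma map_pmf_eq_bernoulli_pmf: "map_pmf (\<lambda>x. x = z) q = bernoulli_pmf (pmf q z)"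
proof (rule pmf_eqI)
  fix b :: bool
  have T: "pmf (map_pmf (\<lambda>x. x = z) q) True = pmf q z"
    by (simp add: pmf_map measure_pmf_single vimage_def)
  then have F: "pmf (map_pmf (\<lambda>x. x = z) q) False = 1 - pmf q z"
    by (metis pmf_False_conv_True)
  show "pmf (map_pmf (\<lambda>x. x = z) q) b = pmf (bernoulli_pmf (pmf q z)) b"
    by (cases b) (simp_all add: T F pmf_le_1)
qed

lemma iid_count_list_binomial:
  "map_pmf (\<lambda>xs. count_list xs z) (iid n q) = binomial_pmf n (pmf q z)"
proof (induction n)
  case 0
  then show ?case by (simp add: binomial_pmf_0 pmf_le_1)
next
  case (Suc n)
  have p: "pmf q z \<in> {0..1}"
    by (simp add: pmf_le_1)
  have "map_pmf (\<lambda>xs. count_list xs z) (iid (Suc n) q)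
      = q \<bind> (\<lambda>x. map_pmf (\<lambda>k. (if x = z then 1 else 0) + k) (map_pmf (\<lambda>xs. count_list xs z) (iid n q)))"
    by (auto simp: map_bind_pmf pmf.map_comp o_def intro!: bind_pmf_cong map_pmf_cong)
  also have "\<dots> = map_pmf (\<lambda>x. x = z) q \<bind> (\<lambda>b. map_pmf (\<lambda>k. (if b then 1 else 0) + k) (binomial_pmf n (pmf q z)))"
    by (simp add: Suc bind_map_pmf)
  also have "\<dots> = binomial_pmf (Suc n) (pmf q z)"
    unfolding map_pmf_eq_bernoulli_pmf binomial_pmf_Suc[OF p]
    by (simp add: map_pmf_def)
  finally show ?case .
qed

lemma prob_iid_frequency_deviation:
  assumes "0 < n" and "0 < \<delta>"
  shows "measure_pmf.prob (iid n q) {xs. \<bar>real (count_list xs z) / n - pmf q z\<bar> > \<delta>}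
    \<le> 2 * exp (-2 * real n * \<delta>\<^sup>2)"
proof -
  have "measure_pmf.prob (iid n q) {xs. \<bar>real (count_list xs z) / n - pmf q z\<bar> > \<delta>}
      = measure_pmf.prob (binomial_pmf n (pmf q z)) {k. \<bar>real k / n - pmf q z\<bar> > \<delta>}"
    by (simp flip: iid_count_list_binomial add: vimage_def)
  also have "\<dots> \<le> measure_pmf.prob (binomial_pmf n (pmf q z)) {k. \<bar>real k / n - pmf q z\<bar> \<ge> \<delta>}"
    by (intro measure_pmf.finite_measure_mono) auto
  also have "\<dots> \<le> 2 * exp (-2 * real n * \<delta>\<^sup>2)"
    using binomial_distribution.prob_abs_ge'[of "pmf q z" n \<delta>] assms
    by (simp add: binomial_distribution_def pmf_le_1)
  finally show ?thesis .
qed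

lemma iid_frequency_converges:
  "converges_in_prob (\<lambda>N. iid N q) (\<lambda>N xs. real (count_list xs z) / N) (pmf q z)"
proof (rule converges_in_probI_bound)
  fix \<epsilon> :: real
  assume "\<epsilon> > 0"
  have "eventually (\<lambda>N. measure_pmf.prob (iid N q) {xs. dist (real (count_list xs z) / N) (pmf q z) > \<epsilon>}
      \<le> 2 * exp (-2 * real N * \<epsilon>\<^sup>2)) sequentially"
    using eventually_gt_at_top[of 0]
  proof eventually_elim
    case (elim N)
    show ?case
      unfolding dist_real_def by (rule prob_iid_frequency_deviation[OF elim \<open>\<epsilon> > 0\<close>])
  qed
  moreover have "((\<lambda>N. 2 * exp (-2 * real N * \<epsilon>\<^sup>2)) \<longlongrightarrow> 0) sequentially"
    using \<open>\<epsilon> > 0\<close> by real_asymp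
  ultimately show "\<exists>\<rho>. (\<rho> \<longlongrightarrow> 0) sequentially \<and> eventually (\<lambda>N.
      measure_pmf.prob (iid N q) {xs. dist (real (count_list xs z) / N) (pmf q z) > \<epsilon>} \<le> \<rho> N) sequentially"
    by blast
qed

section \<open>Weighted pools and resampling\<close>

definition pool_mass :: "'z \<Rightarrow> ('z \<times> real) list \<Rightarrow> real" where
  "pool_mass z P = sum_list (map snd (filter (\<lambda>p. fst p = z) P))"

lemma pool_mass_Nil [simp]: "pool_mass z [] = 0"
  by (simp add: pool_mass_def)

lemma pool_mass_Cons [simp]: "pool_mass z (p # P) = (if fst p = z then snd p else 0) + pool_mass z P"
  by (simp add: pool_mass_def)

lemma pool_mass_append [simp]: "pool_mass z (P @ Q) = pool_mass z P + pool_mass z Q"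
  by (simp add: pool_mass_def)

lemma pool_mass_map: "pool_mass z (map (\<lambda>y. (y, w y)) xs) = real (count_list xs z) * w z"
  by (induction xs) (auto simp: algebra_simps)

lemma pool_mass_singletons:
  "pool_mass z (map (\<lambda>x. ([x], w x)) xs) =
     (if length z = 1 then real (count_list xs (hd z)) * w (hd z) else 0)"
proof (cases "length z = 1")
  case True
  then obtain y where "z = [y]"
    by (auto simp: length_Suc_conv)
  then show ?thesis
    by (induction xs) (auto simp: algebra_simps)
next
  case False
  then show ?thesis
    by (induction xs) auto
qed

lemma pool_mass_eq_0: "z \<notin> fst ` set P \<Longrightarrow> pool_mass z P = 0"
  by (induction P) auto

lemma sum_list_pool_eq_sum_mass:
  assumes "finite A" and "fst ` set P \<subseteq> A"
  shows "(\<Sum>(z, w)\<leftarrow>P. w * g z) = (\<Sum>z\<in>A. g z * pool_mass z P)"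
  using assms(2)
proof (induction P)
  case Nil
  then show ?case by simp
next
  case (Cons p P)
  obtain y v where p: "p = (y, v)"
    by force
  have "y \<in> A"
    using Cons.prems p by auto
  have "(\<Sum>z\<in>A. g z * pool_mass z (p # P)) = (\<Sum>z\<in>A. if z = y then v * g y else 0) + (\<Sum>z\<in>A. g z * pool_mass z P)"
    by (auto simp: p algebra_simps sum.distrib intro!: sum.cong)
  also have "(\<Sum>z\<in>A. if z = y then v * g y else 0) = v * g y"
    using \<open>y \<in> A\<close> assms(1) by simp
  finally show ?case
    using Cons by (simp add: p)
qed

lemma pool_total_eq_sum_mass:
  assumes "finite A" and "fst ` set P \<subseteq> A"
  shows "sum_list (map snd P) = (\<Sum>z\<in>A. pool_mass z P)"
  using sum_list_pool_eq_sum_mass[OF assms, of "\<lambda>_. 1"] by (simp add: case_prod_unfold)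

lemma pool_total_pos:
  fixes P :: "('z \<times> real) list"
  assumes "P \<noteq> []" and "\<forall>p\<in>set P. 0 < snd p"
  shows "0 < sum_list (map snd P)"
  using sum_list_strict_mono[OF assms(1), of "\<lambda>_. 0" snd] assms(2) by simp

lemma sum_list_divide_distrib: "(\<Sum>x\<leftarrow>xs. f x / c) = (\<Sum>x\<leftarrow>xs. f x) / (c :: 'b::field)"
  by (induction xs) (simp_all add: add_divide_distrib)

lemma resample_wf:
  fixes P :: "('z \<times> real) list"
  assumes "P \<noteq> []" and "\<forall>p\<in>set P. 0 < snd p"
  shows "pmf_of_list_wf (map (\<lambda>(z, w). (z, w / sum_list (map snd P))) P)"
proof (rule pmf_of_list_wfI)
  have total: "0 < sum_list (map snd P)"
    using pool_total_pos[OF assms] .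
  show "x \<in> set (map snd (map (\<lambda>(z, w). (z, w / sum_list (map snd P))) P)) \<Longrightarrow> 0 \<le> x" for x
  proof -
    assume "x \<in> set (map snd (map (\<lambda>(z, w). (z, w / sum_list (map snd P))) P))"
    then obtain p where "p \<in> set P" and "x = snd p / sum_list (map snd P)"
      by auto
    then show "0 \<le> x"
      using assms(2) total by (simp add: less_imp_le)
  qed
  have "sum_list (map snd (map (\<lambda>(z, w). (z, w / sum_list (map snd P))) P))
      = sum_list (map snd P) / sum_list (map snd P)"
    by (simp add: case_prod_unfold o_def sum_list_divide_distrib)
  also have "\<dots> = 1"
    using total by simp
  finally show "sum_list (map snd (map (\<lambda>(z, w). (z, w / sum_list (map snd P))) P)) = 1" .
qed

lemma pmf_resample:
  fixes P :: "('z \<times> real) list"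
  assumes "P \<noteq> []" and "\<forall>p\<in>set P. 0 < snd p"
  shows "pmf (resample P) u = pool_mass u P / sum_list (map snd P)"
  unfolding resample_def pmf_pmf_of_list[OF resample_wf[OF assms]]
  by (simp add: filter_map o_def case_prod_unfold sum_list_divide_distrib pool_mass_def)

lemma set_pmf_resample:
  fixes P :: "('z \<times> real) list"
  assumes "P \<noteq> []" and "\<forall>p\<in>set P. 0 < snd p"
  shows "set_pmf (resample P) \<subseteq> fst ` set P"
  using set_pmf_of_list[OF resample_wf[OF assms]] unfolding resample_def by force

lemma pmf_resample_eq_mass_ratio:
  fixes P :: "('z \<times> real) list"
  assumes "P \<noteq> []" and "\<forall>p\<in>set P. 0 < snd p" and "finite A" and "fst ` set P \<subseteq> A"
  shows "pmf (resample P) u = pool_mass u P / (\<Sum>y\<in>A. pool_mass y P)"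
  using pmf_resample[OF assms(1,2)] pool_total_eq_sum_mass[OF assms(3,4)] by simp

lemma estimate_eq_sum_pmf_resample:
  assumes "P \<noteq> []" and "\<forall>p\<in>set P. 0 < snd p" and "finite A" and "fst ` set P \<subseteq> A"
  shows "estimate P f = (\<Sum>z\<in>A. f z * pmf (resample P) z)"
proof -
  have "estimate P f = (\<Sum>z\<in>A. f z * pool_mass z P) / sum_list (map snd P)"
    unfolding estimate_def sum_list_pool_eq_sum_mass[OF assms(3,4)]
    by (simp add: case_prod_unfold)
  then show ?thesis
    by (simp add: pmf_resample[OF assms(1,2)] sum_divide_distrib)
qed

section \<open>One round of PB-SMC\<close>

definition extend_pmf :: "('a list \<Rightarrow> 'a pmf) \<Rightarrow> 'a list pmf \<Rightarrow> 'a list pmf" where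
  "extend_pmf K q = bind_pmf q (\<lambda>u. map_pmf (\<lambda>x. u @ [x]) (K u))"

lemma pmf_extend_pmf:
  assumes "z \<noteq> []"
  shows "pmf (extend_pmf K q) z = pmf q (butlast z) * pmf (K (butlast z)) (last z)"
proof -
  have "pmf (map_pmf (\<lambda>x. u @ [x]) (K u)) z = pmf (K (butlast z)) (last z) * indicator {butlast z} u" for u
  proof -
    have "(\<lambda>x. u @ [x]) -` {z} = (if u = butlast z then {last z} else {})"
      using assms by (auto simp: snoc_eq_iff_butlast)
    then show ?thesis
      by (simp add: pmf_map measure_pmf_single)
  qed
  then show ?thesis
    unfolding extend_pmf_def pmf_bind by (simp add: measure_pmf_single mult.commute)
qed

lemma set_pmf_extend_pmf: "z \<in> set_pmf (extend_pmf K q) \<Longrightarrow> \<exists>u x. z = u @ [x] \<and> u \<in> set_pmf q"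
  by (auto simp: extend_pmf_def)

lemma pprob_snoc: "pprob K (ys @ [y]) = pprob K ys * pmf (K ys) y"
proof -
  have "pprob K (ys @ [y]) = (\<Prod>i<length ys. pmf (K (take i (ys @ [y]))) ((ys @ [y]) ! i)) * pmf (K ys) y"
    by (simp add: pprob_def prod.lessThan_Suc)
  also have "(\<Prod>i<length ys. pmf (K (take i (ys @ [y]))) ((ys @ [y]) ! i)) = pprob K ys"
    unfolding pprob_def by (intro prod.cong) (auto simp: nth_append)
  finally show ?thesis .
qed

definition weighted_pool :: "real \<Rightarrow> ('z \<Rightarrow> real) \<Rightarrow> nat \<Rightarrow> 'z list \<Rightarrow> 'z list \<Rightarrow> ('z \<times> real) list" where
  "weighted_pool a F k B S = map (\<lambda>z. (z, a * F z)) B @ map (\<lambda>z. (z, (1 - a) * F z / real k)) S"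

lemma pool_mass_weighted_pool:
  "pool_mass z (weighted_pool a F k B S) =
     F z * (a * real (count_list B z) + (1 - a) * real (count_list S z) / real k)"
  unfolding weighted_pool_def pool_mass_append pool_mass_map by (simp add: algebra_simps)

definition pbsmc_round ::
  "('a list \<Rightarrow> 'a pmf) \<Rightarrow> ('a list \<Rightarrow> real) \<Rightarrow> (nat \<Rightarrow> real) \<Rightarrow>
   (nat \<Rightarrow> ('a list \<times> real) list \<Rightarrow> real \<Rightarrow> real) \<Rightarrow> nat \<Rightarrow> nat \<Rightarrow>
   ('a list \<times> real) list \<Rightarrow> real \<Rightarrow> (('a list \<times> real) list \<times> real) pmf" where
  "pbsmc_round K r \<alpha> upd N t P b =
     (let b' = upd (Suc t) P b; q = resample P in
      bind_pmf (iid N (extend_pmf K q)) (\<lambda>B.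
        map_pmf (\<lambda>S. (weighted_pool (\<alpha> (Suc t)) (Fcorr r \<alpha> b b' (Suc t)) (Suc t) B S, b'))
          (iid (N * Suc t) q)))"

lemma pbsmc_gen_Suc:
  "pbsmc_gen K r \<alpha> upd b0 N (Suc t) =
     bind_pmf (pbsmc_gen K r \<alpha> upd b0 N t) (\<lambda>(P, b). pbsmc_round K r \<alpha> upd N t P b)"
  by (simp add: pbsmc_round_def weighted_pool_def extend_pmf_def)

lemma set_pmf_pbsmc_gen_SucE:
  assumes "s \<in> set_pmf (pbsmc_gen K r \<alpha> upd b0 N (Suc t))"
  obtains P b B S where "(P, b) \<in> set_pmf (pbsmc_gen K r \<alpha> upd b0 N t)"
    and "B \<in> set_pmf (iid N (extend_pmf K (resample P)))"
    and "S \<in> set_pmf (iid (N * Suc t) (resample P))"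
    and "s = (weighted_pool (\<alpha> (Suc t)) (Fcorr r \<alpha> b (upd (Suc t) P b) (Suc t)) (Suc t) B S,
              upd (Suc t) P b)"
  using assms unfolding pbsmc_gen_Suc by (auto simp: pbsmc_round_def Let_def)

lemma weighted_pool_mass_close:
  fixes \<mu> q :: "'z pmf" and F :: "'z \<Rightarrow> real"
  assumes "0 < N" and "0 < k" and a: "0 \<le> a" "a \<le> 1" and F: "\<bar>F z\<bar> \<le> Fb"
    and B: "\<bar>real (count_list B z) / N - pmf \<mu> z\<bar> \<le> \<delta>"
    and S: "\<bar>real (count_list S z) / real (N * k) - pmf q z\<bar> \<le> \<delta>"
  shows "\<bar>pool_mass z (weighted_pool a F k B S) / N - F z * (a * pmf \<mu> z + (1 - a) * pmf q z)\<bar>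
    \<le> Fb * \<delta>"
proof -
  define x where "x = real (count_list B z) / N - pmf \<mu> z"
  define y where "y = real (count_list S z) / real (N * k) - pmf q z"
  have "pool_mass z (weighted_pool a F k B S) / N - F z * (a * pmf \<mu> z + (1 - a) * pmf q z)
      = F z * (a * x + (1 - a) * y)"
    unfolding pool_mass_weighted_pool x_def y_def using assms(1,2) by (simp add: field_simps)
  moreover have "\<bar>a * x + (1 - a) * y\<bar> \<le> a * \<bar>x\<bar> + (1 - a) * \<bar>y\<bar>"
    using a by (metis abs_mult abs_of_nonneg abs_triangle_ineq diff_ge_0_iff_ge)
  moreover have "a * \<bar>x\<bar> + (1 - a) * \<bar>y\<bar> \<le> a * \<delta> + (1 - a) * \<delta>"
    using B S a unfolding x_def y_def by (intro add_mono mult_left_mono) auto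
  ultimately have "\<bar>a * x + (1 - a) * y\<bar> \<le> \<delta>"
    by (simp add: algebra_simps)
  then show ?thesis
    unfolding \<open>_ = F z * (a * x + (1 - a) * y)\<close> abs_mult using F by (intro mult_mono) auto
qed

lemma prob_round_mass_deviation:
  fixes \<mu> q :: "'z pmf" and F :: "'z \<Rightarrow> real"
  assumes N: "0 < N" and k: "0 < k" and a: "0 \<le> a" "a \<le> 1"
    and F: "\<bar>F z\<bar> \<le> Fb" and Fb: "0 < Fb" and \<epsilon>: "0 < \<epsilon>"
    and centre: "\<bar>F z * (a * pmf \<mu> z + (1 - a) * pmf q z) - m\<bar> \<le> \<epsilon> / 2"
  shows "measure_pmf.prob
      (bind_pmf (iid N \<mu>) (\<lambda>B. map_pmf (\<lambda>S. (weighted_pool a F k B S, b)) (iid (N * k) q)))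
      {s. dist (pool_mass z (fst s) / N) m > \<epsilon>} \<le> 4 * exp (-2 * real N * (\<epsilon> / (4 * Fb))\<^sup>2)"
proof -
  define \<delta> where "\<delta> = \<epsilon> / (4 * Fb)"
  have \<delta>: "0 < \<delta>"
    using \<epsilon> Fb by (simp add: \<delta>_def)
  have tail: "measure_pmf.prob (iid n p) {xs. \<bar>real (count_list xs z) / n - pmf p z\<bar> > \<delta>}
      \<le> 2 * exp (-2 * real N * \<delta>\<^sup>2)" if "N \<le> n" for n and p :: "'z pmf"
  proof -
    have "measure_pmf.prob (iid n p) {xs. \<bar>real (count_list xs z) / n - pmf p z\<bar> > \<delta>}
        \<le> 2 * exp (-2 * real n * \<delta>\<^sup>2)"
      using that N \<delta> by (intro prob_iid_frequency_deviation) auto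
    also have "\<dots> \<le> 2 * exp (-2 * real N * \<delta>\<^sup>2)"
      using that by (simp add: mult_right_mono)
    finally show ?thesis .
  qed
  have close: "dist (pool_mass z (weighted_pool a F k B S) / N) m \<le> \<epsilon>"
    if "\<bar>real (count_list B z) / N - pmf \<mu> z\<bar> \<le> \<delta>"
      and "\<bar>real (count_list S z) / real (N * k) - pmf q z\<bar> \<le> \<delta>" for B S
  proof -
    have "\<bar>pool_mass z (weighted_pool a F k B S) / N - F z * (a * pmf \<mu> z + (1 - a) * pmf q z)\<bar>
        \<le> Fb * \<delta>"
      by (rule weighted_pool_mass_close[OF N k a]) (use F that in auto)
    also have "Fb * \<delta> = \<epsilon> / 4"
      using Fb by (simp add: \<delta>_def)
    finally show ?thesis
      unfolding dist_real_def using centre by linarith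
  qed
  have "measure_pmf.prob
      (bind_pmf (iid N \<mu>) (\<lambda>B. map_pmf (\<lambda>S. (weighted_pool a F k B S, b)) (iid (N * k) q)))
      {s. dist (pool_mass z (fst s) / N) m > \<epsilon>}
      \<le> 2 * exp (-2 * real N * \<delta>\<^sup>2) +
        measure_pmf.prob (iid N \<mu>) {B. \<bar>real (count_list B z) / N - pmf \<mu> z\<bar> > \<delta>}"
  proof (rule measure_pmf_prob_bind_le)
    fix B
    assume "B \<notin> {B. \<bar>real (count_list B z) / N - pmf \<mu> z\<bar> > \<delta>}"
    then have "measure_pmf.prob (iid (N * k) q)
          {S. dist (pool_mass z (weighted_pool a F k B S) / N) m > \<epsilon>}
        \<le> measure_pmf.prob (iid (N * k) q)
          {S. \<bar>real (count_list S z) / real (N * k) - pmf q z\<bar> > \<delta>}"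
    proof (intro measure_pmf_prob_mono_support)
      fix S
      assume "S \<in> {S. dist (pool_mass z (weighted_pool a F k B S) / N) m > \<epsilon>}"
      then show "S \<in> {S. \<bar>real (count_list S z) / real (N * k) - pmf q z\<bar> > \<delta>}"
        using close[of B S] \<open>B \<notin> _\<close> by (metis (no_types, lifting) mem_Collect_eq not_less)
    qed
    also have "\<dots> \<le> 2 * exp (-2 * real N * \<delta>\<^sup>2)"
      using k by (intro tail) simp
    finally show "measure_pmf.prob (map_pmf (\<lambda>S. (weighted_pool a F k B S, b)) (iid (N * k) q))
        {s. dist (pool_mass z (fst s) / N) m > \<epsilon>} \<le> 2 * exp (-2 * real N * \<delta>\<^sup>2)"
      by (simp add: vimage_def)
  qed simp
  also have "\<dots> \<le> 4 * exp (-2 * real N * \<delta>\<^sup>2)"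
    using tail[of N \<mu>] by simp
  finally show ?thesis
    unfolding \<delta>_def .
qed

section \<open>Unnormalised targets and the correction factor\<close>

definition target_weight :: "('a list \<Rightarrow> 'a pmf) \<Rightarrow> ('a list \<Rightarrow> real) \<Rightarrow> nat \<Rightarrow> real \<Rightarrow> 'a list \<Rightarrow> real" where
  "target_weight K r t \<beta> z =
     (if 1 \<le> length z \<and> length z \<le> t + 1 then pprob K z * r z powr \<beta> else 0)"

lemma target_weight_butlast:
  assumes "1 \<le> length z" and "length z \<le> t + 2"
  shows "target_weight K r t b (butlast z) * pmf (K (butlast z)) (last z)
    = (if 2 \<le> length z then pprob K z * rsc r (butlast z) powr b else 0)"
proof (cases "2 \<le> length z")
  case True
  then have "butlast z \<noteq> []" "1 \<le> length (butlast z)" "length (butlast z) \<le> t + 1"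
    using assms(2) by (cases z rule: rev_cases; auto)+
  moreover have "z \<noteq> []"
    using assms(1) by auto
  then have "pprob K z = pprob K (butlast z) * pmf (K (butlast z)) (last z)"
    using pprob_snoc[of K "butlast z" "last z"] by simp
  ultimately show ?thesis
    using True by (simp add: target_weight_def rsc_def)
next
  case False
  then have "length (butlast z) = 0"
    by simp
  then show ?thesis
    using False by (simp add: target_weight_def)
qed

lemma target_exp_eq_target_weight:
  "target_exp K r T t \<beta> f =
     (\<Sum>z\<in>prefixes T. f z * target_weight K r t \<beta> z) / (\<Sum>z\<in>prefixes T. target_weight K r t \<beta> z)"
  unfolding target_exp_def target_weight_def prefixes_def
  by (intro arg_cong2[where f = "(/)"] sum.cong) auto

lemma target_weight_nonneg: "0 \<le> target_weight K r t \<beta> z"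
  unfolding target_weight_def pprob_def by (auto intro!: prod_nonneg mult_nonneg_nonneg)

lemma finite_prefixes: "finite (prefixes T :: 'a::finite list set)"
proof (rule finite_subset)
  show "prefixes T \<subseteq> {xs :: 'a list. set xs \<subseteq> UNIV \<and> length xs \<le> T + 1}"
    by (auto simp: prefixes_def)
  show "finite {xs :: 'a list. set xs \<subseteq> UNIV \<and> length xs \<le> T + 1}"
    by (rule finite_lists_length_le) simp
qed

locale pbsmc_scores =
  fixes r :: "'a list \<Rightarrow> real" and T :: nat and \<alpha> :: "nat \<Rightarrow> real"
  assumes r_pos: "\<And>z. z \<in> prefixes T \<Longrightarrow> 0 < r z"
    and alpha: "\<And>t. 1 \<le> t \<Longrightarrow> t \<le> T \<Longrightarrow> 0 < \<alpha> t \<and> \<alpha> t < 1"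
begin

lemma rsc_butlast_pos:
  assumes "z \<in> prefixes T"
  shows "0 < rsc r (butlast z)"
proof (cases "butlast z = []")
  case False
  with assms have "butlast z \<in> prefixes T"
    by (cases z rule: rev_cases) (auto simp: prefixes_def Suc_le_eq)
  then show ?thesis
    using False r_pos by (simp add: rsc_def)
qed (simp add: rsc_def)

lemma Fcorr_denominator_pos:
  assumes "1 \<le> t" "t \<le> T" "1 \<le> length z" "length z \<le> t + 1" "0 < q"
  shows "0 < \<alpha> t * (if 2 \<le> length z then 1 else 0) + (1 - \<alpha> t) * q powr b * (if length z \<le> t then 1 else 0)"
proof -
  have a: "0 < \<alpha> t" "\<alpha> t < 1"
    using alpha assms(1,2) by auto
  show ?thesis
  proof (cases "2 \<le> length z")
    case True
    have "0 \<le> (1 - \<alpha> t) * q powr b * (if length z \<le> t then 1 else 0)"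
      using a by simp
    then show ?thesis
      using True a by (intro add_pos_nonneg) simp_all
  next
    case False
    then have "length z \<le> t"
      using assms(1,3) by simp
    then show ?thesis
      using False a assms(5) by simp
  qed
qed

lemma Fcorr_pos:
  assumes "1 \<le> t" "t \<le> T" "1 \<le> length z" "length z \<le> t + 1"
  shows "0 < Fcorr r \<alpha> b b' t z"
proof -
  have "z \<in> prefixes T"
    using assms by (simp add: prefixes_def)
  then have "0 < r z" "0 < rsc r (butlast z)"
    using r_pos rsc_butlast_pos by auto
  then show ?thesis
    unfolding Fcorr_def Let_def by (intro divide_pos_pos mult_pos_pos Fcorr_denominator_pos assms) simp_all
qed

lemma isCont_Fcorr:
  assumes "1 \<le> t" "t \<le> T" "1 \<le> length z" "length z \<le> t + 1"
  shows "isCont (\<lambda>p. Fcorr r \<alpha> (fst p) (snd p) t z) x"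
proof -
  have "z \<in> prefixes T"
    using assms by (simp add: prefixes_def)
  then have "0 < r z" "0 < r z / rsc r (butlast z)"
    using r_pos rsc_butlast_pos by auto
  then show ?thesis
    unfolding Fcorr_def Let_def
    using Fcorr_denominator_pos[OF assms, of "r z / rsc r (butlast z)" "fst x"]
    by (intro continuous_intros) auto
qed

lemma Fcorr_balance:
  assumes "Suc t \<le> T" "1 \<le> length z" "length z \<le> t + 2"
  shows "Fcorr r \<alpha> b b' (Suc t) z *
      (\<alpha> (Suc t) * (target_weight K r t b (butlast z) * pmf (K (butlast z)) (last z)) +
       (1 - \<alpha> (Suc t)) * target_weight K r t b z)
    = target_weight K r (Suc t) b' z"
proof -
  define a where "a = \<alpha> (Suc t)"
  define Rb where "Rb = rsc r (butlast z)"
  define q where "q = r z / Rb"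
  define D where "D = a * (if 2 \<le> length z then 1 else 0) + (1 - a) * q powr b * (if length z \<le> Suc t then 1 else 0)"
  have "z \<in> prefixes T"
    using assms by (simp add: prefixes_def)
  then have R: "0 < r z" and Rb: "0 < Rb"
    unfolding Rb_def using r_pos rsc_butlast_pos by auto
  have D: "0 < D"
    unfolding D_def a_def q_def using assms R Rb by (intro Fcorr_denominator_pos) auto
  have extended: "target_weight K r t b (butlast z) * pmf (K (butlast z)) (last z)
      = (if 2 \<le> length z then pprob K z * Rb powr b else 0)"
    unfolding Rb_def using assms(2,3) by (rule target_weight_butlast)
  have kept: "target_weight K r t b z = (if length z \<le> Suc t then pprob K z * (q powr b * Rb powr b) else 0)"
    unfolding target_weight_def q_def using assms(2) R Rb by (simp add: powr_divide)
  have F: "Fcorr r \<alpha> b b' (Suc t) z = q powr b * r z powr (b' - b) / D"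
    unfolding Fcorr_def Let_def D_def q_def Rb_def a_def by simp
  have M: "a * (target_weight K r t b (butlast z) * pmf (K (butlast z)) (last z)) +
      (1 - a) * target_weight K r t b z = pprob K z * Rb powr b * D"
    unfolding extended kept D_def by (simp add: algebra_simps)
  have "Fcorr r \<alpha> b b' (Suc t) z *
      (a * (target_weight K r t b (butlast z) * pmf (K (butlast z)) (last z)) +
       (1 - a) * target_weight K r t b z)
      = q powr b * r z powr (b' - b) / D * (pprob K z * Rb powr b * D)"
    unfolding F M ..
  also have "\<dots> = pprob K z * (q powr b * Rb powr b * r z powr (b' - b))"
    using D by (simp add: field_simps)
  also have "q powr b * Rb powr b * r z powr (b' - b) = r z powr b'"
    unfolding q_def using R Rb by (simp add: powr_divide powr_add[symmetric])
  also have "pprob K z * r z powr b' = target_weight K r (Suc t) b' z"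
    using assms(2,3) by (simp add: target_weight_def)
  finally show ?thesis
    unfolding a_def .
qed

end

section \<open>Consistency for a power schedule close to a deterministic one\<close>

text \<open>Fixed powers satisfy upd_close with C = 0, the adaptive update with
C = gamma ((R_max/R_min)^2 + 1) (lemma adaptive_upd_close).\<close>

locale pbsmc = pbsmc_scores r T \<alpha>
  for r :: "'a::finite list \<Rightarrow> real" and T \<alpha> +
  fixes K :: "'a list \<Rightarrow> 'a pmf"
    and upd :: "nat \<Rightarrow> ('a list \<times> real) list \<Rightarrow> real \<Rightarrow> real"
    and \<beta>s :: "nat \<Rightarrow> real" and C :: real
  assumes C_nonneg: "0 \<le> C"
    and upd_close: "\<And>s P b. 1 \<le> s \<Longrightarrow> s \<le> T \<Longrightarrow> fst ` set P \<subseteq> prefixes T \<Longrightarrow>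
      \<bar>upd s P b - \<beta>s s\<bar> \<le> \<bar>b - \<beta>s (s - 1)\<bar> + C / real (length P)"
begin

abbreviation smc :: "nat \<Rightarrow> nat \<Rightarrow> (('a list \<times> real) list \<times> real) pmf" where
  "smc N t \<equiv> pbsmc_gen K r \<alpha> upd (\<beta>s 0) N t"

lemma pool_shape:
  assumes "t \<le> T" and "s \<in> set_pmf (smc N t)"
  shows "length (fst s) = N * (t + 1) \<and>
    (\<forall>p\<in>set (fst s). 1 \<le> length (fst p) \<and> length (fst p) \<le> t + 1 \<and> 0 < snd p)"
  using assms
proof (induction t arbitrary: s)
  case 0
  then obtain xs where xs: "xs \<in> set_pmf (iid N (K []))"
    and s: "s = (map (\<lambda>x. ([x], r [x] powr \<beta>s 0)) xs, \<beta>s 0)"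
    by auto
  have "r [x] \<noteq> 0" for x
    using r_pos[of "[x]"] by (simp add: prefixes_def)
  then show ?case
    using set_pmf_iid[OF xs] by (auto simp: s)
next
  case (Suc t)
  from Suc.prems(2) obtain P b B S where Pb: "(P, b) \<in> set_pmf (smc N t)"
    and B: "B \<in> set_pmf (iid N (extend_pmf K (resample P)))"
    and S: "S \<in> set_pmf (iid (N * Suc t) (resample P))"
    and s: "s = (weighted_pool (\<alpha> (Suc t)) (Fcorr r \<alpha> b (upd (Suc t) P b) (Suc t)) (Suc t) B S,
                upd (Suc t) P b)"
    by (rule set_pmf_pbsmc_gen_SucE)
  have P: "length P = N * (t + 1)" "\<forall>p\<in>set P. 1 \<le> length (fst p) \<and> length (fst p) \<le> t + 1 \<and> 0 < snd p"
    using Suc.IH[OF _ Pb] Suc.prems(1) by auto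
  have resampled: "1 \<le> length u \<and> length u \<le> t + 1" if "u \<in> set_pmf (resample P)" "0 < N" for u
  proof -
    have "P \<noteq> []"
      using P(1) \<open>0 < N\<close> by auto
    then show ?thesis
      using set_pmf_resample[of P] P(2) that(1) by auto
  qed
  have members: "1 \<le> length z \<and> length z \<le> Suc t + 1" if "z \<in> set B \<union> set S" for z
    using that set_pmf_iid[OF B] set_pmf_iid[OF S] resampled
    by (fastforce dest!: set_pmf_extend_pmf)
  have "0 < \<alpha> (Suc t)" "\<alpha> (Suc t) < 1"
    using alpha[of "Suc t"] Suc.prems(1) by auto
  moreover have "0 < Fcorr r \<alpha> b (upd (Suc t) P b) (Suc t) z" if "z \<in> set B \<union> set S" for z
    using members[OF that] Suc.prems(1) by (intro Fcorr_pos) auto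
  ultimately show ?case
    using set_pmf_iid[OF B] set_pmf_iid[OF S] members
    by (auto simp: s weighted_pool_def)
qed

lemma pool_prefixes:
  assumes "t \<le> T" and "s \<in> set_pmf (smc N t)"
  shows "fst ` set (fst s) \<subseteq> prefixes T"
  using pool_shape[OF assms] assms(1) by (force simp: prefixes_def)

lemma pool_nonempty_pos:
  assumes "t \<le> T" and "s \<in> set_pmf (smc N t)" and "0 < N"
  shows "fst s \<noteq> []" and "\<forall>p\<in>set (fst s). 0 < snd p"
  using pool_shape[OF assms(1,2)] assms(3) by auto

lemma next_power_close:
  assumes "Suc t \<le> T" and "s \<in> set_pmf (smc N t)" and "\<bar>snd s - \<beta>s t\<bar> \<le> C * t / N"
  shows "\<bar>upd (Suc t) (fst s) (snd s) - \<beta>s (Suc t)\<bar> \<le> C * Suc t / N"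
proof -
  have "\<bar>upd (Suc t) (fst s) (snd s) - \<beta>s (Suc t)\<bar> \<le> \<bar>snd s - \<beta>s t\<bar> + C / real (length (fst s))"
    using upd_close[of "Suc t"] pool_prefixes[of t s] assms(1,2) by simp
  moreover have "C / real (length (fst s)) \<le> C / N"
    using pool_shape[of t s N] assms(1,2) C_nonneg
    by (cases "N = 0") (auto intro!: divide_left_mono simp: zero_less_mult_iff add_pos_nonneg)
  ultimately show ?thesis
    using assms(3) by (simp add: add_divide_distrib distrib_left)
qed

lemma power_close:
  assumes "t \<le> T" and "s \<in> set_pmf (smc N t)"
  shows "\<bar>snd s - \<beta>s t\<bar> \<le> C * t / N"
  using assms
proof (induction t arbitrary: s)
  case (Suc t)
  obtain P b where Pb: "(P, b) \<in> set_pmf (smc N t)" and s: "snd s = upd (Suc t) P b"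
    using set_pmf_pbsmc_gen_SucE[OF Suc.prems(2)] by (metis snd_conv)
  have "\<bar>b - \<beta>s t\<bar> \<le> C * t / N"
    using Suc.IH[OF _ Pb] Suc.prems(1) by simp
  then show ?case
    using next_power_close[OF Suc.prems(1) Pb] s by simp
qed auto

lemma power_converges:
  assumes "t \<le> T"
  shows "converges_in_prob (\<lambda>N. smc N t) (\<lambda>N s. snd s) (\<beta>s t)"
  by (rule converges_in_prob_deterministic[where e = "\<lambda>N. C * t / N"])
     (simp_all add: dist_real_def assms power_close lim_const_over_n)

lemma next_power_converges:
  assumes "Suc t \<le> T"
  shows "converges_in_prob (\<lambda>N. smc N t) (\<lambda>N s. upd (Suc t) (fst s) (snd s)) (\<beta>s (Suc t))"
proof (rule converges_in_prob_deterministic[where e = "\<lambda>N. C * Suc t / N"])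
  have "\<bar>upd (Suc t) (fst s) (snd s) - \<beta>s (Suc t)\<bar> \<le> C * Suc t / N" if "s \<in> set_pmf (smc N t)" for N s
    using assms that by (intro next_power_close power_close) auto
  then show "eventually (\<lambda>N. \<forall>s\<in>set_pmf (smc N t).
      dist (upd (Suc t) (fst s) (snd s)) (\<beta>s (Suc t)) \<le> C * Suc t / N) sequentially"
    by (simp add: dist_real_def)
qed (rule lim_const_over_n)


abbreviation target_norm :: "nat \<Rightarrow> real" where
  "target_norm t \<equiv> \<Sum>y\<in>prefixes T. target_weight K r t (\<beta>s t) y"

lemma target_norm_pos: "0 < target_norm t"
proof -
  obtain x where x: "x \<in> set_pmf (K [])"
    using set_pmf_not_empty by fast
  have "[x] \<in> prefixes T"
    by (simp add: prefixes_def)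
  then have "0 < pmf (K []) x * r [x] powr \<beta>s t"
    using x r_pos[OF \<open>[x] \<in> prefixes T\<close>] by (intro mult_pos_pos) (simp_all add: pmf_positive)
  then have "0 < target_weight K r t (\<beta>s t) [x]"
    by (simp add: target_weight_def pprob_def)
  then show ?thesis
    using \<open>[x] \<in> prefixes T\<close> by (intro sum_pos2[OF finite_prefixes]) (auto simp: target_weight_nonneg)
qed

lemma mass_converges_base:
  "converges_in_prob (\<lambda>N. smc N 0) (\<lambda>N s. pool_mass z (fst s) / N) (target_weight K r 0 (\<beta>s 0) z)"
  unfolding pbsmc_gen.simps(1) converges_in_prob_map_pmf fst_conv pool_mass_singletons
proof (cases "length z = 1")
  case True
  then obtain x where z: "z = [x]"
    by (auto simp: length_Suc_conv)
  have lim: "converges_in_prob (\<lambda>N. iid N (K [])) (\<lambda>N xs. real (count_list xs x) / N * r [x] powr \<beta>s 0)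
      (pmf (K []) x * r [x] powr \<beta>s 0)"
    by (intro converges_in_prob_mult iid_frequency_converges converges_in_prob_const)
  have weight: "target_weight K r 0 (\<beta>s 0) z = pmf (K []) x * r [x] powr \<beta>s 0"
    by (simp add: z target_weight_def pprob_def)
  show "converges_in_prob (\<lambda>N. iid N (K []))
      (\<lambda>N xs. (if length z = 1 then real (count_list xs (hd z)) * r [hd z] powr \<beta>s 0 else 0) / N)
      (target_weight K r 0 (\<beta>s 0) z)"
    unfolding weight by (rule converges_in_prob_cong[OF lim]) (simp add: z)
next
  case False
  then have "target_weight K r 0 (\<beta>s 0) z = 0"
    by (auto simp: target_weight_def)
  with False show "converges_in_prob (\<lambda>N. iid N (K []))
      (\<lambda>N xs. (if length z = 1 then real (count_list xs (hd z)) * r [hd z] powr \<beta>s 0 else 0) / N)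
      (target_weight K r 0 (\<beta>s 0) z)"
    using converges_in_prob_const[of _ 0] by (simp add: target_weight_def)
qed

lemma resample_converges:
  assumes "t \<le> T" and "0 < c"
    and mass: "\<And>y. converges_in_prob (\<lambda>N. smc N t) (\<lambda>N s. pool_mass y (fst s) / N)
      (target_weight K r t (\<beta>s t) y / c)"
  shows "converges_in_prob (\<lambda>N. smc N t) (\<lambda>N s. pmf (resample (fst s)) u)
    (target_weight K r t (\<beta>s t) u / target_norm t)"
proof -
  have "(\<Sum>y\<in>prefixes T. target_weight K r t (\<beta>s t) y / c) \<noteq> 0"
    using target_norm_pos[of t] \<open>0 < c\<close> by (simp add: sum_divide_distrib[symmetric])
  then have lim: "converges_in_prob (\<lambda>N. smc N t)
      (\<lambda>N s. (pool_mass u (fst s) / N) / (\<Sum>y\<in>prefixes T. pool_mass y (fst s) / N))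
      ((target_weight K r t (\<beta>s t) u / c) / (\<Sum>y\<in>prefixes T. target_weight K r t (\<beta>s t) y / c))"
    by (rule converges_in_prob_divide[OF mass converges_in_prob_sum[OF finite_prefixes mass]])
  have ratio: "eventually (\<lambda>N. \<forall>s\<in>set_pmf (smc N t).
      (pool_mass u (fst s) / N) / (\<Sum>y\<in>prefixes T. pool_mass y (fst s) / N) = pmf (resample (fst s)) u)
      sequentially"
    using eventually_gt_at_top[of 0]
  proof eventually_elim
    case (elim N)
    show ?case
    proof
      fix s
      assume s: "s \<in> set_pmf (smc N t)"
      show "(pool_mass u (fst s) / N) / (\<Sum>y\<in>prefixes T. pool_mass y (fst s) / N) = pmf (resample (fst s)) u"
        using pool_nonempty_pos[OF assms(1) s elim] pool_prefixes[OF assms(1) s] elim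
        by (simp add: pmf_resample_eq_mass_ratio[OF _ _ finite_prefixes] sum_divide_distrib[symmetric])
    qed
  qed
  have limit: "(target_weight K r t (\<beta>s t) u / c) / (\<Sum>y\<in>prefixes T. target_weight K r t (\<beta>s t) y / c)
      = target_weight K r t (\<beta>s t) u / target_norm t"
    using \<open>0 < c\<close> by (simp add: sum_divide_distrib[symmetric])
  show ?thesis
    unfolding limit[symmetric] by (rule converges_in_prob_cong[OF lim ratio])
qed

definition next_Fcorr :: "nat \<Rightarrow> 'a list \<Rightarrow> ('a list \<times> real) list \<times> real \<Rightarrow> real" where
  "next_Fcorr t z s = Fcorr r \<alpha> (snd s) (upd (Suc t) (fst s) (snd s)) (Suc t) z"

text \<open>The conditional expectation of pool_mass z P_{t+1} / N given the state of round t.\<close>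

definition round_mean :: "nat \<Rightarrow> 'a list \<Rightarrow> ('a list \<times> real) list \<times> real \<Rightarrow> real" where
  "round_mean t z s = next_Fcorr t z s *
     (\<alpha> (Suc t) * pmf (extend_pmf K (resample (fst s))) z + (1 - \<alpha> (Suc t)) * pmf (resample (fst s)) z)"

lemma next_Fcorr_converges:
  assumes "Suc t \<le> T" and "1 \<le> length z" and "length z \<le> t + 2"
  shows "converges_in_prob (\<lambda>N. smc N t) (\<lambda>N. next_Fcorr t z) (Fcorr r \<alpha> (\<beta>s t) (\<beta>s (Suc t)) (Suc t) z)"
proof (unfold next_Fcorr_def, rule converges_in_prob_isCont2[where g = "\<lambda>b b'. Fcorr r \<alpha> b b' (Suc t) z"])
  show "converges_in_prob (\<lambda>N. smc N t) (\<lambda>N s. snd s) (\<beta>s t)"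
    using assms(1) by (intro power_converges) simp
  show "converges_in_prob (\<lambda>N. smc N t) (\<lambda>N s. upd (Suc t) (fst s) (snd s)) (\<beta>s (Suc t))"
    using assms(1) by (rule next_power_converges)
  show "isCont (\<lambda>p. Fcorr r \<alpha> (fst p) (snd p) (Suc t) z) (\<beta>s t, \<beta>s (Suc t))"
    using assms by (intro isCont_Fcorr) auto
qed

lemma round_mean_converges:
  assumes "Suc t \<le> T" and "1 \<le> length z" and "length z \<le> t + 2"
    and resampled: "\<And>u. converges_in_prob (\<lambda>N. smc N t) (\<lambda>N s. pmf (resample (fst s)) u)
      (target_weight K r t (\<beta>s t) u / target_norm t)"
  shows "converges_in_prob (\<lambda>N. smc N t) (\<lambda>N. round_mean t z)
    (target_weight K r (Suc t) (\<beta>s (Suc t)) z / target_norm t)"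
proof -
  let ?L = "target_weight K r t (\<beta>s t)"
  have "z \<noteq> []"
    using assms(2) by auto
  have regroup: "F * (a * (x / Z * p) + (1 - a) * (y / Z)) = F * (a * (x * p) + (1 - a) * y) / Z"
    for F a x p y Z :: real
    by (simp add: divide_simps)
  have "converges_in_prob (\<lambda>N. smc N t) (\<lambda>N. round_mean t z)
      (Fcorr r \<alpha> (\<beta>s t) (\<beta>s (Suc t)) (Suc t) z *
        (\<alpha> (Suc t) * (?L (butlast z) / target_norm t * pmf (K (butlast z)) (last z)) +
         (1 - \<alpha> (Suc t)) * (?L z / target_norm t)))"
    unfolding round_mean_def pmf_extend_pmf[OF \<open>z \<noteq> []\<close>]
    by (rule converges_in_prob_mult[OF next_Fcorr_converges[OF assms(1-3)]
          converges_in_prob_add[OF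
            converges_in_prob_mult[OF converges_in_prob_const converges_in_prob_mult[OF resampled converges_in_prob_const]]
            converges_in_prob_mult[OF converges_in_prob_const resampled]]])
  also have "Fcorr r \<alpha> (\<beta>s t) (\<beta>s (Suc t)) (Suc t) z *
        (\<alpha> (Suc t) * (?L (butlast z) / target_norm t * pmf (K (butlast z)) (last z)) +
         (1 - \<alpha> (Suc t)) * (?L z / target_norm t))
      = Fcorr r \<alpha> (\<beta>s t) (\<beta>s (Suc t)) (Suc t) z *
        (\<alpha> (Suc t) * (?L (butlast z) * pmf (K (butlast z)) (last z)) +
         (1 - \<alpha> (Suc t)) * ?L z) / target_norm t"
    by (rule regroup)
  also have "\<dots> = target_weight K r (Suc t) (\<beta>s (Suc t)) z / target_norm t"
    unfolding Fcorr_balance[OF assms(1-3)] ..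
  finally show ?thesis .
qed


lemma pool_mass_smc_eq_0:
  assumes "t \<le> T" and "s \<in> set_pmf (smc N t)" and "\<not> (1 \<le> length z \<and> length z \<le> t + 1)"
  shows "pool_mass z (fst s) = 0"
  using pool_shape[OF assms(1,2)] assms(3) by (intro pool_mass_eq_0) auto

lemma round_concentrates:
  assumes "Suc t \<le> T" and "0 < N" and "0 < \<epsilon>" and "0 < Fb" and "\<bar>next_Fcorr t z s\<bar> \<le> Fb"
    and "\<bar>round_mean t z s - m\<bar> \<le> \<epsilon> / 2"
  shows "measure_pmf.prob (case s of (P, b) \<Rightarrow> pbsmc_round K r \<alpha> upd N t P b)
      {s'. dist (pool_mass z (fst s') / N) m > \<epsilon>} \<le> 4 * exp (-2 * real N * (\<epsilon> / (4 * Fb))\<^sup>2)"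
proof -
  obtain P b where s: "s = (P, b)"
    by force
  have "0 < \<alpha> (Suc t)" "\<alpha> (Suc t) < 1"
    using alpha[of "Suc t"] assms(1) by auto
  then show ?thesis
    using assms(2-6) unfolding s prod.case pbsmc_round_def Let_def
    by (intro prob_round_mass_deviation) (auto simp: next_Fcorr_def round_mean_def)
qed

lemma mass_converges_step:
  assumes "Suc t \<le> T"
    and resampled: "\<And>u. converges_in_prob (\<lambda>N. smc N t) (\<lambda>N s. pmf (resample (fst s)) u)
      (target_weight K r t (\<beta>s t) u / target_norm t)"
  shows "converges_in_prob (\<lambda>N. smc N (Suc t)) (\<lambda>N s. pool_mass z (fst s) / N)
    (target_weight K r (Suc t) (\<beta>s (Suc t)) z / target_norm t)"
proof (cases "1 \<le> length z \<and> length z \<le> t + 2")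
  case False
  then have "target_weight K r (Suc t) (\<beta>s (Suc t)) z = 0"
    by (auto simp: target_weight_def)
  with False show ?thesis
    using pool_mass_smc_eq_0[OF assms(1)]
    by (intro converges_in_prob_deterministic[where e = "\<lambda>_. 0"]) simp_all
next
  case True
  define Fs where "Fs = Fcorr r \<alpha> (\<beta>s t) (\<beta>s (Suc t)) (Suc t) z"
  define m where "m = target_weight K r (Suc t) (\<beta>s (Suc t)) z / target_norm t"
  have centre: "converges_in_prob (\<lambda>N. smc N t) (\<lambda>N s. (next_Fcorr t z s, round_mean t z s)) (Fs, m)"
    unfolding Fs_def m_def using True
    by (intro converges_in_prob_Pair next_Fcorr_converges round_mean_converges assms) auto
  show ?thesis
    unfolding pbsmc_gen_Suc m_def[symmetric]
  proof (rule converges_in_prob_bind_pmfI)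
    fix \<epsilon> :: real
    assume "0 < \<epsilon>"
    define Fb where "Fb = \<bar>Fs\<bar> + 1"
    define c where "c = \<epsilon> / (4 * Fb)"
    define \<delta> where "\<delta> = min 1 (\<epsilon> / 2)"
    have "0 < Fb" "0 < c" "0 < \<delta>"
      using \<open>0 < \<epsilon>\<close> by (simp_all add: Fb_def c_def \<delta>_def add_pos_nonneg)
    let ?Bad = "\<lambda>N. {s. dist (next_Fcorr t z s, round_mean t z s) (Fs, m) > \<delta>}"
    let ?\<rho> = "\<lambda>N. 4 * exp (-2 * real N * c\<^sup>2)"
    have bad: "((\<lambda>N. measure_pmf.prob (smc N t) (?Bad N)) \<longlongrightarrow> 0) sequentially"
      using centre \<open>0 < \<delta>\<close> unfolding converges_in_prob_def by blast
    have \<rho>: "(?\<rho> \<longlongrightarrow> 0) sequentially"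
      using \<open>0 < c\<close> by real_asymp
    have "dist (next_Fcorr t z s) Fs \<le> \<delta>" and "dist (round_mean t z s) m \<le> \<delta>" if "s \<notin> ?Bad N" for N s
      using that dist_fst_le[of "(next_Fcorr t z s, round_mean t z s)" "(Fs, m)"]
        dist_snd_le[of "(next_Fcorr t z s, round_mean t z s)" "(Fs, m)"] by auto
    moreover have "\<delta> \<le> 1" and "\<delta> \<le> \<epsilon> / 2"
      by (simp_all add: \<delta>_def)
    ultimately have centred: "\<bar>next_Fcorr t z s\<bar> \<le> Fb" "\<bar>round_mean t z s - m\<bar> \<le> \<epsilon> / 2"
      if "s \<notin> ?Bad N" for N s
      using that by (fastforce simp: Fb_def dist_real_def)+
    have good: "eventually (\<lambda>N. \<forall>s\<in>set_pmf (smc N t). s \<notin> ?Bad N \<longrightarrow>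
        measure_pmf.prob (case s of (P, b) \<Rightarrow> pbsmc_round K r \<alpha> upd N t P b)
          {s. dist (pool_mass z (fst s) / N) m > \<epsilon>} \<le> ?\<rho> N) sequentially"
      using eventually_gt_at_top[of 0]
    proof eventually_elim
      case (elim N)
      show ?case
        unfolding c_def
        using round_concentrates[OF assms(1) elim \<open>0 < \<epsilon>\<close> \<open>0 < Fb\<close> centred] by blast
    qed
    show "\<exists>\<rho> Bad. (\<forall>N. 0 \<le> \<rho> N) \<and> (\<rho> \<longlongrightarrow> 0) sequentially \<and>
        ((\<lambda>N. measure_pmf.prob (smc N t) (Bad N)) \<longlongrightarrow> 0) sequentially \<and>
        eventually (\<lambda>N. \<forall>s\<in>set_pmf (smc N t). s \<notin> Bad N \<longrightarrow>
          measure_pmf.prob (case s of (P, b) \<Rightarrow> pbsmc_round K r \<alpha> upd N t P b)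
            {s. dist (pool_mass z (fst s) / N) m > \<epsilon>} \<le> \<rho> N) sequentially"
      by (rule exI[of _ ?\<rho>], rule exI[of _ ?Bad], intro conjI allI, simp, fact \<rho>, fact bad, fact good)
  qed
qed

text \<open>The constant c is the normaliser of the previous round's target (1 for t = 0).\<close>

lemma mass_converges:
  assumes "t \<le> T"
  shows "\<exists>c>0. \<forall>z. converges_in_prob (\<lambda>N. smc N t) (\<lambda>N s. pool_mass z (fst s) / N)
    (target_weight K r t (\<beta>s t) z / c)"
  using assms
proof (induction t)
  case 0
  show ?case
    using mass_converges_base by (intro exI[of _ 1]) simp
next
  case (Suc t)
  then obtain c where "0 < c" and "\<And>z. converges_in_prob (\<lambda>N. smc N t)
      (\<lambda>N s. pool_mass z (fst s) / N) (target_weight K r t (\<beta>s t) z / c)"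
    by auto
  then have "converges_in_prob (\<lambda>N. smc N t) (\<lambda>N s. pmf (resample (fst s)) u)
      (target_weight K r t (\<beta>s t) u / target_norm t)" for u
    using Suc.prems by (intro resample_converges) auto
  then have "converges_in_prob (\<lambda>N. smc N (Suc t)) (\<lambda>N s. pool_mass z (fst s) / N)
      (target_weight K r (Suc t) (\<beta>s (Suc t)) z / target_norm t)" for z
    using Suc.prems by (intro mass_converges_step)
  then show ?case
    using target_norm_pos[of t] by blast
qed

theorem estimate_converges:
  assumes "t \<le> T"
  shows "converges_in_prob (\<lambda>N. smc N t) (\<lambda>N s. estimate (fst s) f) (target_exp K r T t (\<beta>s t) f)"
proof -
  obtain c where "0 < c" and "\<And>z. converges_in_prob (\<lambda>N. smc N t)
      (\<lambda>N s. pool_mass z (fst s) / N) (target_weight K r t (\<beta>s t) z / c)"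
    using mass_converges[OF assms] by auto
  then have "converges_in_prob (\<lambda>N. smc N t) (\<lambda>N s. pmf (resample (fst s)) u)
      (target_weight K r t (\<beta>s t) u / target_norm t)" for u
    using assms by (intro resample_converges) auto
  then have lim: "converges_in_prob (\<lambda>N. smc N t) (\<lambda>N s. \<Sum>z\<in>prefixes T. f z * pmf (resample (fst s)) z)
      (\<Sum>z\<in>prefixes T. f z * (target_weight K r t (\<beta>s t) z / target_norm t))"
    by (intro converges_in_prob_sum[OF finite_prefixes] converges_in_prob_mult[OF converges_in_prob_const])
  have estimate: "eventually (\<lambda>N. \<forall>s\<in>set_pmf (smc N t).
      (\<Sum>z\<in>prefixes T. f z * pmf (resample (fst s)) z) = estimate (fst s) f) sequentially"
    using eventually_gt_at_top[of 0]
  proof eventually_elim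
    case (elim N)
    show ?case
    proof
      fix s
      assume s: "s \<in> set_pmf (smc N t)"
      show "(\<Sum>z\<in>prefixes T. f z * pmf (resample (fst s)) z) = estimate (fst s) f"
        using pool_nonempty_pos[OF assms s elim] pool_prefixes[OF assms s]
        by (simp add: estimate_eq_sum_pmf_resample[OF _ _ finite_prefixes])
    qed
  qed
  have limit: "(\<Sum>z\<in>prefixes T. f z * (target_weight K r t (\<beta>s t) z / target_norm t))
      = target_exp K r T t (\<beta>s t) f"
    unfolding target_exp_eq_target_weight by (simp add: sum_divide_distrib)
  show ?thesis
    unfolding limit[symmetric] by (rule converges_in_prob_cong[OF lim estimate])
qed

end

section \<open>The fixed and the adaptive power schedules\<close>

lemma sigma_pool_le:
  fixes P :: "('a list \<times> real) list"
  assumes "0 < Rmin" and bounds: "\<And>z w. (z, w) \<in> set P \<Longrightarrow> Rmin \<le> r z \<and> r z \<le> Rmax"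
  shows "0 \<le> sigma_pool r P \<and> sigma_pool r P \<le> (Rmax / Rmin)\<^sup>2 / length P"
proof (cases "P = []")
  case True
  then show ?thesis
    by (simp add: sigma_pool_def)
next
  case False
  define L where "L = real (length P)"
  define S where "S = (\<Sum>(y, v)\<leftarrow>P. r y)"
  have "0 < L"
    using False by (simp add: L_def)
  have "L * Rmin \<le> S"
    using sum_list_mono[of P "\<lambda>_. Rmin" "\<lambda>(y, v). r y"] bounds
    by (force simp: L_def S_def sum_list_triv)
  then have "0 < S"
    using \<open>0 < L\<close> \<open>0 < Rmin\<close> by (smt (verit) mult_pos_pos)
  have term_le: "(r (fst p) / S)\<^sup>2 \<le> (Rmax / (L * Rmin))\<^sup>2" if "p \<in> set P" for p
  proof -
    have "0 \<le> r (fst p)" "r (fst p) \<le> Rmax"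
      using bounds[of "fst p" "snd p"] that \<open>0 < Rmin\<close> by auto
    then have "r (fst p) / S \<le> Rmax / (L * Rmin)"
      using \<open>L * Rmin \<le> S\<close> \<open>0 < L\<close> \<open>0 < Rmin\<close> by (intro frac_le) auto
    then show ?thesis
      using \<open>0 \<le> r (fst p)\<close> \<open>0 < S\<close> by (intro power_mono) auto
  qed
  have "sigma_pool r P = (\<Sum>p\<leftarrow>P. (r (fst p) / S)\<^sup>2)"
    by (simp add: sigma_pool_def S_def case_prod_unfold)
  also have "\<dots> \<le> (\<Sum>p\<leftarrow>P. (Rmax / (L * Rmin))\<^sup>2)"
    using term_le by (intro sum_list_mono)
  also have "\<dots> = (Rmax / Rmin)\<^sup>2 / length P"
    using \<open>0 < L\<close> by (simp add: L_def sum_list_triv power2_eq_square field_simps)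
  finally show ?thesis
    by (auto simp: sigma_pool_def intro!: sum_list_nonneg)
qed

lemma adaptive_upd_close:
  assumes "0 < Rmin" and "0 \<le> \<gamma>" and "\<And>z w. (z, w) \<in> set P \<Longrightarrow> Rmin \<le> r z \<and> r z \<le> Rmax"
  shows "\<bar>adaptive_upd r \<gamma> s P b - (\<beta> + \<gamma>)\<bar> \<le> \<bar>b - \<beta>\<bar> + \<gamma> * ((Rmax / Rmin)\<^sup>2 + 1) / length P"
proof -
  have \<sigma>: "0 \<le> sigma_pool r P" "sigma_pool r P \<le> (Rmax / Rmin)\<^sup>2 / length P"
    using sigma_pool_le[of Rmin P r Rmax, OF assms(1,3)] by auto
  have "0 \<le> 1 / real (length P)"
    by simp
  then have "\<bar>1 / real (length P) - sigma_pool r P\<bar> \<le> ((Rmax / Rmin)\<^sup>2 + 1) / length P"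
    unfolding add_divide_distrib using \<sigma> by (intro abs_leI) linarith+
  then have "\<gamma> * \<bar>1 / real (length P) - sigma_pool r P\<bar> \<le> \<gamma> * (((Rmax / Rmin)\<^sup>2 + 1) / length P)"
    by (rule mult_left_mono[OF _ assms(2)])
  then have "\<bar>\<gamma> * (1 / real (length P) - sigma_pool r P)\<bar> \<le> \<gamma> * ((Rmax / Rmin)\<^sup>2 + 1) / length P"
    by (simp add: abs_mult abs_of_nonneg[OF assms(2)])
  moreover have "adaptive_upd r \<gamma> s P b - (\<beta> + \<gamma>) = (b - \<beta>) + \<gamma> * (1 / real (length P) - sigma_pool r P)"
    by (simp add: adaptive_upd_def algebra_simps)
  ultimately show ?thesis
    by linarith
qed

theorem pbsmc_fixed_estimate_converges:
  fixes K :: "'a::finite list \<Rightarrow> 'a pmf"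
  assumes "\<And>z. z \<in> prefixes T \<Longrightarrow> 0 < r z"
    and "\<And>t. 1 \<le> t \<Longrightarrow> t \<le> T \<Longrightarrow> 0 < \<alpha> t \<and> \<alpha> t < 1"
    and "t \<le> T"
  shows "converges_in_prob (\<lambda>N. pbsmc_fixed K r \<alpha> \<beta> N t) (\<lambda>N s. estimate (fst s) f)
    (target_exp K r T t (\<beta> t) f)"
proof -
  interpret pbsmc r T \<alpha> K "\<lambda>s P b. \<beta> s" \<beta> 0
    by unfold_locales (use assms in auto)
  show ?thesis
    unfolding pbsmc_fixed_def by (rule estimate_converges[OF assms(3)])
qed

theorem pbsmc_adaptive_converges:
  fixes K :: "'a::finite list \<Rightarrow> 'a pmf"
  assumes "0 < Rmin" and r_bounds: "\<And>z. z \<in> prefixes T \<Longrightarrow> Rmin \<le> r z \<and> r z \<le> Rmax"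
    and "\<And>t. 1 \<le> t \<Longrightarrow> t \<le> T \<Longrightarrow> 0 < \<alpha> t \<and> \<alpha> t < 1"
    and "0 \<le> \<gamma>" and "t \<le> T"
  shows "converges_in_prob (\<lambda>N. pbsmc_adaptive K r \<alpha> \<gamma> \<beta>0 N t) (\<lambda>N s. snd s) (\<beta>0 + \<gamma> * t)"
    and "converges_in_prob (\<lambda>N. pbsmc_adaptive K r \<alpha> \<gamma> \<beta>0 N t) (\<lambda>N s. estimate (fst s) f)
      (target_exp K r T t (\<beta>0 + \<gamma> * t) f)"
proof -
  interpret pbsmc r T \<alpha> K "adaptive_upd r \<gamma>" "\<lambda>t. \<beta>0 + \<gamma> * t" "\<gamma> * ((Rmax / Rmin)\<^sup>2 + 1)"
  proof unfold_locales
    show "0 < r z" if "z \<in> prefixes T" for z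
      using r_bounds[OF that] \<open>0 < Rmin\<close> by linarith
    show "0 \<le> \<gamma> * ((Rmax / Rmin)\<^sup>2 + 1)"
      using \<open>0 \<le> \<gamma>\<close> by simp
    fix s and P :: "('a list \<times> real) list" and b
    assume "1 \<le> s" and "s \<le> T" and "fst ` set P \<subseteq> prefixes T"
    then have step: "\<beta>0 + \<gamma> * real s = (\<beta>0 + \<gamma> * real (s - 1)) + \<gamma>"
      by (simp add: of_nat_diff algebra_simps)
    have "Rmin \<le> r z \<and> r z \<le> Rmax" if "(z, w) \<in> set P" for z w
      using r_bounds \<open>fst ` set P \<subseteq> prefixes T\<close> that by force
    then have "\<bar>adaptive_upd r \<gamma> s P b - ((\<beta>0 + \<gamma> * real (s - 1)) + \<gamma>)\<bar>
        \<le> \<bar>b - (\<beta>0 + \<gamma> * real (s - 1))\<bar> + \<gamma> * ((Rmax / Rmin)\<^sup>2 + 1) / real (length P)"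
      by (rule adaptive_upd_close[OF \<open>0 < Rmin\<close> \<open>0 \<le> \<gamma>\<close>])
    then show "\<bar>adaptive_upd r \<gamma> s P b - (\<beta>0 + \<gamma> * real s)\<bar>
        \<le> \<bar>b - (\<beta>0 + \<gamma> * real (s - 1))\<bar> + \<gamma> * ((Rmax / Rmin)\<^sup>2 + 1) / real (length P)"
      unfolding step .
  qed (use assms in auto)
  show "converges_in_prob (\<lambda>N. pbsmc_adaptive K r \<alpha> \<gamma> \<beta>0 N t) (\<lambda>N s. snd s) (\<beta>0 + \<gamma> * t)"
    using power_converges[OF \<open>t \<le> T\<close>] by (simp add: pbsmc_adaptive_def)
  show "converges_in_prob (\<lambda>N. pbsmc_adaptive K r \<alpha> \<gamma> \<beta>0 N t) (\<lambda>N s. estimate (fst s) f)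
      (target_exp K r T t (\<beta>0 + \<gamma> * t) f)"
    using estimate_converges[OF \<open>t \<le> T\<close>] by (simp add: pbsmc_adaptive_def)
qed

theorem theorem1:
  fixes K :: "'a::finite list \<Rightarrow> 'a pmf"
    and r :: "'a list \<Rightarrow> real"
    and T :: nat and Rmin Rmax :: real
    and \<alpha> :: "nat \<Rightarrow> real"
  assumes Rmin: "0 < Rmin"
    and r_bounds: "\<And>z. z \<in> prefixes T \<Longrightarrow> Rmin \<le> r z \<and> r z \<le> Rmax"
    and alpha: "\<And>t. 1 \<le> t \<Longrightarrow> t \<le> T \<Longrightarrow> 0 < \<alpha> t \<and> \<alpha> t < 1"
  shows
    "(\<forall>(\<beta> :: nat \<Rightarrow> real) t (f :: 'a list \<Rightarrow> real) \<epsilon>.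
        (\<forall>s\<le>T. 0 \<le> \<beta> s) \<longrightarrow> t \<le> T \<longrightarrow> 0 < \<epsilon> \<longrightarrow>
        ((\<lambda>N. measure_pmf.prob (pbsmc_fixed K r \<alpha> \<beta> N t)
                {s. \<bar>estimate (fst s) f - target_exp K r T t (\<beta> t) f\<bar> > \<epsilon>})
           \<longlongrightarrow> 0) sequentially)
   \<and>
    (\<forall>(\<gamma> :: real) (\<beta>0 :: real). 0 < \<gamma> \<longrightarrow> 0 \<le> \<beta>0 \<longrightarrow>
       (\<exists>\<beta>star :: nat \<Rightarrow> real. \<forall>t\<le>T.
          (\<forall>\<epsilon>>0. ((\<lambda>N. measure_pmf.prob (pbsmc_adaptive K r \<alpha> \<gamma> \<beta>0 N t)
                      {s. \<bar>snd s - \<beta>star t\<bar> > \<epsilon>}) \<longlongrightarrow> 0) sequentially)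
        \<and> (\<forall>(f :: 'a list \<Rightarrow> real) \<epsilon>. 0 < \<epsilon> \<longrightarrow>
            ((\<lambda>N. measure_pmf.prob (pbsmc_adaptive K r \<alpha> \<gamma> \<beta>0 N t)
                {s. \<bar>estimate (fst s) f - target_exp K r T t (\<beta>star t) f\<bar> > \<epsilon>})
               \<longlongrightarrow> 0) sequentially)))"
proof -
  have r_pos: "0 < r z" if "z \<in> prefixes T" for z
    using r_bounds[OF that] Rmin by linarith
  have fixed: "converges_in_prob (\<lambda>N. pbsmc_fixed K r \<alpha> \<beta> N t) (\<lambda>N s. estimate (fst s) f)
      (target_exp K r T t (\<beta> t) f)" if "t \<le> T" for \<beta> t f
    by (rule pbsmc_fixed_estimate_converges) (use r_pos alpha that in auto)
  have adaptive: "\<exists>\<beta>star. \<forall>t\<le>T.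
      converges_in_prob (\<lambda>N. pbsmc_adaptive K r \<alpha> \<gamma> \<beta>0 N t) (\<lambda>N s. snd s) (\<beta>star t) \<and>
      (\<forall>f. converges_in_prob (\<lambda>N. pbsmc_adaptive K r \<alpha> \<gamma> \<beta>0 N t) (\<lambda>N s. estimate (fst s) f)
        (target_exp K r T t (\<beta>star t) f))" if "0 < \<gamma>" for \<gamma> \<beta>0
    using that Rmin r_bounds alpha
    by (intro exI[of _ "\<lambda>t. \<beta>0 + \<gamma> * real t"] allI impI conjI
        pbsmc_adaptive_converges[where Rmin = Rmin and Rmax = Rmax]) auto
  show ?thesis
    using fixed adaptive unfolding converges_in_prob_def dist_real_def by blast
qed

end
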